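(* Let $M\ge4$ be even and $1<\alpha\le2$. Then every eigenvalue $\lambda_{T_2}$ of the 2-level Toeplitz matrix $T_2=I\otimes T_1+T_1\otimes I\in\mathbb{R}^{M^2\times M^2}$ satisfies $$\frac{4\Delta t\,\theta}{(\mathrm{b}-\mathrm{a})^{\alpha}}<\lambda_{T_2}<\frac{4\Delta t}{h^{\alpha}}\left[\frac{\Gamma(\alpha+1)}{\Gamma(\alpha/2+1)^2}-\frac{\theta h^{\alpha}}{(\mathrm{b}-\mathrm{a})^{\alpha}}\right].$$
   Context: Let $\mathrm{a}<\mathrm{b}$, $h=(\mathrm{b}-\mathrm{a})/(M+1)$, $\Delta t>0$, $\mu=\Delta t/h^{\alpha}$. For $k\in\mathbb{Z}$ let $c_k=\frac{(-1)^k\Gamma(\alpha+1)}{\Gamma(\alpha/2-k+1)\Gamma(\alpha/2+k+1)}$. Let $T_1=\mu T_0\in\mathbb{R}^{M\times M}$ where $T_0$ is the symmetric Toeplitz matrix with entries $[T_0]_{i,j}=c_{i-j}$. The constant $\theta$ is $$\theta=\frac{\left(1-\frac{1+\alpha}{5+\alpha/2}\right)^{5+\frac{\alpha}{2}}e^{1+\alpha}\Gamma(\alpha+1)\sin\left(\frac{\pi\alpha}{2}\right)}{\pi\alpha}.$$ $I$ is the $M\times M$ identity and $\otimes$ the Kronecker product. *)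

theory Defs
  imports "HOL-Analysis.Analysis" "Jordan_Normal_Form.Char_Poly"
begin

definition kron :: "'a :: times mat \<Rightarrow> 'a mat \<Rightarrow> 'a mat" where
  "kron A B = mat (dim_row A * dim_row B) (dim_col A * dim_col B)
     (\<lambda>(i, j). A $$ (i div dim_row B, j div dim_col B) * B $$ (i mod dim_row B, j mod dim_col B))"

text \<open>Coefficients c_k of the fractional centred difference; division by Gamma
  is written via the reciprocal Gamma function rGamma (1/Gamma at poles is 0).\<close>
definition frac_coeff :: "real \<Rightarrow> int \<Rightarrow> real" where
  "frac_coeff \<alpha> k = (-1) powi k * Gamma (\<alpha> + 1)
      * rGamma (\<alpha>/2 - of_int k + 1) * rGamma (\<alpha>/2 + of_int k + 1)"

definition T0 :: "real \<Rightarrow> nat \<Rightarrow> real mat" where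
  "T0 \<alpha> M = mat M M (\<lambda>(i, j). frac_coeff \<alpha> (int i - int j))"

definition theta :: "real \<Rightarrow> real" where
  "theta \<alpha> = (1 - (1 + \<alpha>) / (5 + \<alpha>/2)) powr (5 + \<alpha>/2) * exp (1 + \<alpha>)
      * Gamma (\<alpha> + 1) * sin (pi * \<alpha> / 2) / (pi * \<alpha>)"

end

(*
  Write A = mu T0, so that T2 = I \<otimes> A + A \<otimes> I, and view an eigenvector as an M x M array w;
  then lam w = w A^T + A w. At an entry of w of maximal modulus this yields the Gershgorin bound
  |lam - 2 mu c_0| \<le> 2 mu E, where E = 2 (|c_1| + ... + |c_(M-1)|) bounds the off-diagonal row
  sums of T0. The bound is strict: equality would force the maximum one row up, through the
  nonzero subdiagonal entry c_1, all the way to row 0, whose off-diagonal sum is only E/2.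

  The recurrence c_(k+1) (alpha/2 + k + 1) = (k - alpha/2) c_k telescopes to
  c_0 - E = (2M + alpha)/alpha |c_M|. The reflection formula turns |c_M| into a multiple of
  Gamma(M - alpha/2) / Gamma(M + alpha/2 + 1), and Wendel's inequality
  Gamma(x + t) \<le> x^t Gamma(x) (log-convexity of Gamma) bounds this from below; since
  (1 - t/s)^s e^t \<le> 1, the result dominates theta, giving c_0 - E \<ge> 2 theta / (M + 1)^alpha.
  Both estimates follow, as mu / (M + 1)^alpha = dt / (b - a)^alpha.
*)
theory Submission
  imports Defs
begin

(* Both HOL-Analysis and Jordan_Normal_Form write $ for vector indexing; only the latter is used. *)
unbundle no vec_syntax

lemma frac_coeff_minus: "frac_coeff \<alpha> (- k) = frac_coeff \<alpha> k"
  unfolding frac_coeff_def by (simp add: power_int_minus_one_minus algebra_simps)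

lemma frac_coeff_of_nat:
  "frac_coeff \<alpha> (int k) = (-1) ^ k * Gamma (\<alpha> + 1)
     * rGamma (\<alpha>/2 - real k + 1) * rGamma (\<alpha>/2 + real k + 1)"
  unfolding frac_coeff_def by simp

lemma frac_coeff_0: "frac_coeff \<alpha> 0 = Gamma (\<alpha> + 1) / Gamma (\<alpha>/2 + 1)^2"
  unfolding frac_coeff_def by (simp add: rGamma_inverse_Gamma power2_eq_square field_simps)

lemma frac_coeff_0_pos: "-1 < \<alpha> \<Longrightarrow> 0 < frac_coeff \<alpha> 0"
proof -
  assume "-1 < \<alpha>"
  then have "0 < Gamma (\<alpha> + 1)" "0 < Gamma (\<alpha>/2 + 1)" by simp_all
  then show ?thesis unfolding frac_coeff_0 by simp
qed

lemma frac_coeff_Suc: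
  "frac_coeff \<alpha> (int (Suc k)) * (\<alpha>/2 + real k + 1) = (real k - \<alpha>/2) * frac_coeff \<alpha> (int k)"
proof -
  define A where "A = rGamma (\<alpha>/2 - real k + 1)"
  define B where "B = rGamma (\<alpha>/2 + real k + 2)"
  have "rGamma (\<alpha>/2 - real (Suc k) + 1) = (\<alpha>/2 - real k) * A"
    using rGamma_plus1[of "\<alpha>/2 - real k"] unfolding A_def by simp
  moreover have "rGamma (\<alpha>/2 + real (Suc k) + 1) = B"
    unfolding B_def by (simp add: algebra_simps)
  ultimately have Suc_k: "frac_coeff \<alpha> (int (Suc k)) = - ((-1) ^ k * Gamma (\<alpha> + 1) * (\<alpha>/2 - real k) * A * B)"
    unfolding frac_coeff_of_nat by simp
  have "rGamma (\<alpha>/2 + real k + 1) = (\<alpha>/2 + real k + 1) * B"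
    using rGamma_plus1[of "\<alpha>/2 + real k + 1"] unfolding B_def by (simp add: algebra_simps)
  then have k: "frac_coeff \<alpha> (int k) = (-1) ^ k * Gamma (\<alpha> + 1) * A * ((\<alpha>/2 + real k + 1) * B)"
    unfolding frac_coeff_of_nat A_def by simp
  show ?thesis unfolding Suc_k k by (simp add: field_simps)
qed

lemma abs_frac_coeff_Suc:
  assumes "0 \<le> \<alpha>"
  shows "\<bar>frac_coeff \<alpha> (int (Suc k))\<bar> * (\<alpha>/2 + real k + 1)
           = \<bar>real k - \<alpha>/2\<bar> * \<bar>frac_coeff \<alpha> (int k)\<bar>"
proof -
  have "\<bar>\<alpha>/2 + real k + 1\<bar> = \<alpha>/2 + real k + 1" using assms by simp
  then show ?thesis
    using arg_cong[OF frac_coeff_Suc[of \<alpha> k], of abs] by (simp only: abs_mult)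
qed

lemma abs_frac_coeff_1_pos: "0 < \<alpha> \<Longrightarrow> 0 < \<bar>frac_coeff \<alpha> 1\<bar>"
  using abs_frac_coeff_Suc[of \<alpha> 0] frac_coeff_0_pos[of \<alpha>] by auto

definition frac_abs_sum :: "real \<Rightarrow> nat \<Rightarrow> real" where
  "frac_abs_sum \<alpha> n = (\<Sum>k = 1..n. \<bar>frac_coeff \<alpha> (int k)\<bar>)"

lemma frac_abs_sum_mono: "m \<le> n \<Longrightarrow> frac_abs_sum \<alpha> m \<le> frac_abs_sum \<alpha> n"
  unfolding frac_abs_sum_def by (intro sum_mono2) auto

lemma frac_abs_sum_pos: "0 < \<alpha> \<Longrightarrow> 1 \<le> n \<Longrightarrow> 0 < frac_abs_sum \<alpha> n"
  using frac_abs_sum_mono[of 1 n \<alpha>] abs_frac_coeff_1_pos[of \<alpha>]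
  by (simp add: frac_abs_sum_def)

lemma frac_coeff_0_minus_abs_sum:
  assumes "0 < \<alpha>" "\<alpha> \<le> 2"
  shows "\<alpha> * frac_coeff \<alpha> 0 - 2 * \<alpha> * frac_abs_sum \<alpha> n
           = (2 * real n + 2 + \<alpha>) * \<bar>frac_coeff \<alpha> (int (Suc n))\<bar>"
proof (induction n)
  case 0
  then show ?case
    using abs_frac_coeff_Suc[of \<alpha> 0] frac_coeff_0_pos[of \<alpha>] assms
    by (simp add: frac_abs_sum_def algebra_simps)
next
  case (Suc n)
  have "\<alpha> * frac_coeff \<alpha> 0 - 2 * \<alpha> * frac_abs_sum \<alpha> (Suc n)
      = 2 * ((real (Suc n) - \<alpha>/2) * \<bar>frac_coeff \<alpha> (int (Suc n))\<bar>)"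
    using Suc.IH by (simp add: frac_abs_sum_def algebra_simps)
  also have "\<dots> = (2 * real (Suc n) + 2 + \<alpha>) * \<bar>frac_coeff \<alpha> (int (Suc (Suc n)))\<bar>"
    using abs_frac_coeff_Suc[of \<alpha> "Suc n"] assms by (simp add: algebra_simps)
  finally show ?case .
qed

lemma rGamma_reflection_real: "rGamma (x::real) * rGamma (1 - x) = sin (pi * x) / pi"
proof -
  have "complex_of_real (rGamma x * rGamma (1 - x)) = complex_of_real (sin (pi * x) / pi)"
    using rGamma_reflection_complex[of "complex_of_real x"]
    by (simp add: rGamma_complex_of_real[symmetric] sin_of_real[symmetric])
  then show ?thesis using of_real_eq_iff by blast
qed

lemma abs_frac_coeff_eq:
  assumes "0 < \<alpha>" "\<alpha> \<le> 2" "\<alpha> < 2 * real n"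
  shows "\<bar>frac_coeff \<alpha> (int n)\<bar> = Gamma (\<alpha> + 1) * sin (pi * \<alpha> / 2) / pi
           * Gamma (real n - \<alpha>/2) / Gamma (real n + \<alpha>/2 + 1)"
proof -
  define x where "x = real n - \<alpha>/2"
  have "0 < x" using assms unfolding x_def by simp
  have "Gamma x * rGamma x = 1"
    using Gamma_real_pos[OF \<open>0 < x\<close>] by (simp add: rGamma_inverse_Gamma)
  moreover have "\<alpha>/2 - real n + 1 = 1 - x" by (simp add: x_def)
  ultimately have "rGamma (\<alpha>/2 - real n + 1) = Gamma x * (rGamma x * rGamma (1 - x))"
    by (metis mult.assoc mult_1_left)
  also have "\<dots> = Gamma x * ((-1) ^ Suc n * sin (pi * \<alpha> / 2)) / pi"
  proof -
    have "pi * x = real n * pi - pi * \<alpha> / 2" unfolding x_def by (simp add: algebra_simps)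
    then show ?thesis by (simp add: rGamma_reflection_real sin_diff)
  qed
  finally have reflected: "rGamma (\<alpha>/2 - real n + 1) = Gamma x * ((-1) ^ Suc n * sin (pi * \<alpha> / 2)) / pi" .
  have "rGamma (\<alpha>/2 + real n + 1) = 1 / Gamma (real n + \<alpha>/2 + 1)"
    by (simp add: rGamma_inverse_Gamma inverse_eq_divide add_ac)
  then have "\<bar>frac_coeff \<alpha> (int n)\<bar> = \<bar>(-1) ^ n * Gamma (\<alpha> + 1)
      * (Gamma x * ((-1) ^ Suc n * sin (pi * \<alpha> / 2)) / pi) * (1 / Gamma (real n + \<alpha>/2 + 1))\<bar>"
    unfolding frac_coeff_of_nat reflected by simp
  also have "\<dots> = Gamma (\<alpha> + 1) * sin (pi * \<alpha> / 2) / pi * Gamma x / Gamma (real n + \<alpha>/2 + 1)"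
  proof -
    have "0 \<le> sin (pi * \<alpha> / 2)" using assms by (intro sin_ge_zero) auto
    moreover have "0 < Gamma (\<alpha> + 1)" "0 < Gamma x" "0 < Gamma (real n + \<alpha>/2 + 1)"
      using assms \<open>0 < x\<close> by simp_all
    ultimately show ?thesis by (simp add: abs_mult power_abs)
  qed
  finally show ?thesis unfolding x_def .
qed

lemma Gamma_add_le_powr_Gamma:
  fixes x t :: real
  assumes "0 < x" "0 \<le> t" "t \<le> 1"
  shows "Gamma (x + t) \<le> x powr t * Gamma x"
proof -
  have "ln (Gamma ((1 - t) * x + t * (x + 1))) \<le> (1 - t) * ln (Gamma x) + t * ln (Gamma (x + 1))"
    using convex_onD[OF log_convex_Gamma_real, of t x "x + 1"] assms by simp
  moreover have "(1 - t) * x + t * (x + 1) = x + t" by (simp add: algebra_simps)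
  moreover have "Gamma (x + 1) = x * Gamma x"
    using assms by (simp add: Gamma_plus1 nonpos_Ints_def)
  then have "ln (Gamma (x + 1)) = ln x + ln (Gamma x)"
    using assms Gamma_real_pos[of x] by (simp add: ln_mult_pos)
  ultimately have "ln (Gamma (x + t)) \<le> ln (x powr t * Gamma x)"
    using assms Gamma_real_pos[of x] by (simp add: ln_mult_pos algebra_simps)
  then show ?thesis
    using assms Gamma_real_pos[of "x + t"] Gamma_real_pos[of x] by simp
qed

lemma Gamma_add_plus_1_le:
  fixes x \<alpha> :: real
  assumes "0 < x" "1 \<le> \<alpha>" "\<alpha> \<le> 2"
  shows "Gamma (x + \<alpha> + 1) \<le> (x + \<alpha>) * (x + \<alpha> - 1) * x powr (\<alpha> - 1) * Gamma x"
proof -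
  have "Gamma (x + \<alpha>) = (x + \<alpha> - 1) * Gamma (x + (\<alpha> - 1))"
    using Gamma_plus1[of "x + \<alpha> - 1"] assms by (auto simp: nonpos_Ints_def algebra_simps)
  moreover have "Gamma (x + \<alpha> + 1) = (x + \<alpha>) * Gamma (x + \<alpha>)"
    using assms by (intro Gamma_plus1) (auto simp: nonpos_Ints_def)
  ultimately have "Gamma (x + \<alpha> + 1) = (x + \<alpha>) * ((x + \<alpha> - 1) * Gamma (x + (\<alpha> - 1)))"
    by simp
  also have "\<dots> \<le> (x + \<alpha>) * ((x + \<alpha> - 1) * (x powr (\<alpha> - 1) * Gamma x))"
    using Gamma_add_le_powr_Gamma[of x "\<alpha> - 1"] assms by (intro mult_left_mono) auto
  finally show ?thesis by (simp add: mult.assoc)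
qed

lemma one_minus_div_powr_mult_exp_le_1:
  fixes s t :: real
  assumes "0 < s" "t < s"
  shows "(1 - t / s) powr s * exp t \<le> 1"
proof -
  have pos: "0 < 1 - t / s" using assms by (simp add: field_simps)
  then have "s * ln (1 - t / s) \<le> s * (- t / s)"
    using ln_le_minus_one[OF pos] assms by (intro mult_left_mono) auto
  then have "s * ln (1 - t / s) + t \<le> 0" using assms by simp
  then show ?thesis using pos by (simp add: powr_def exp_add[symmetric])
qed

lemma Gamma_sin_div_pi_nonneg:
  assumes "0 \<le> \<alpha>" "\<alpha> \<le> 2"
  shows "0 \<le> Gamma (\<alpha> + 1) * sin (pi * \<alpha> / 2) / pi"
proof -
  have "0 < Gamma (\<alpha> + 1)" using assms by simp
  moreover have "0 \<le> sin (pi * \<alpha> / 2)" using assms by (intro sin_ge_zero) auto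
  ultimately show ?thesis by simp
qed

lemma abs_frac_coeff_ge:
  assumes "1 \<le> \<alpha>" "\<alpha> \<le> 2" "2 \<le> n"
  shows "Gamma (\<alpha> + 1) * sin (pi * \<alpha> / 2) / pi / ((real n + \<alpha>/2) * (real n + 1) powr \<alpha>)
           \<le> \<bar>frac_coeff \<alpha> (int n)\<bar>"
proof -
  define x where "x = real n - \<alpha>/2"
  define W where "W = Gamma (\<alpha> + 1) * sin (pi * \<alpha> / 2) / pi"
  define N where "N = (real n + 1) powr \<alpha>"
  have "0 < x" using assms by (simp add: x_def)
  have "0 < Gamma x" "0 < Gamma (x + \<alpha> + 1)" using \<open>0 < x\<close> assms by simp_all
  have "0 \<le> W" unfolding W_def using Gamma_sin_div_pi_nonneg assms by simp
  have "(x + \<alpha> - 1) * x powr (\<alpha> - 1) \<le> (real n + 1) * (real n + 1) powr (\<alpha> - 1)"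
    using assms \<open>0 < x\<close> by (intro mult_mono powr_mono2) (auto simp: x_def)
  also have "\<dots> = N" by (simp add: N_def powr_mult_base)
  finally have "(x + \<alpha>) * ((x + \<alpha> - 1) * x powr (\<alpha> - 1)) * Gamma x \<le> (x + \<alpha>) * N * Gamma x"
    using \<open>0 < x\<close> \<open>0 < Gamma x\<close> assms by (intro mult_right_mono mult_left_mono) auto
  then have "Gamma (x + \<alpha> + 1) \<le> (x + \<alpha>) * N * Gamma x"
    using Gamma_add_plus_1_le[OF \<open>0 < x\<close> assms(1,2)] by (simp add: mult.assoc)
  then have "Gamma x / ((x + \<alpha>) * N * Gamma x) \<le> Gamma x / Gamma (x + \<alpha> + 1)"
    using \<open>0 < Gamma x\<close> \<open>0 < Gamma (x + \<alpha> + 1)\<close> by (intro divide_left_mono) auto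
  then have "W / ((x + \<alpha>) * N) \<le> W * Gamma x / Gamma (x + \<alpha> + 1)"
    using \<open>0 < Gamma x\<close> \<open>0 \<le> W\<close> mult_left_mono[of _ _ W] by fastforce
  also have "\<dots> = \<bar>frac_coeff \<alpha> (int n)\<bar>"
  proof -
    have "x + \<alpha> + 1 = real n + \<alpha>/2 + 1" by (simp add: x_def)
    then show ?thesis unfolding W_def using abs_frac_coeff_eq[of \<alpha> n] assms by (simp add: x_def add_ac)
  qed
  finally have "W / ((x + \<alpha>) * N) \<le> \<bar>frac_coeff \<alpha> (int n)\<bar>" .
  moreover have "x + \<alpha> = real n + \<alpha>/2" by (simp add: x_def)
  ultimately show ?thesis by (simp add: W_def N_def)
qed

lemma theta_le_abs_frac_coeff:
  assumes "1 \<le> \<alpha>" "\<alpha> \<le> 2" "2 \<le> n"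
  shows "2 * theta \<alpha> / (real n + 1) powr \<alpha> \<le> (2 * real n + \<alpha>) / \<alpha> * \<bar>frac_coeff \<alpha> (int n)\<bar>"
proof -
  define W where "W = Gamma (\<alpha> + 1) * sin (pi * \<alpha> / 2) / pi"
  define N where "N = (real n + 1) powr \<alpha>"
  define K where "K = (1 - (1 + \<alpha>) / (5 + \<alpha>/2)) powr (5 + \<alpha>/2) * exp (1 + \<alpha>)"
  have "0 < N" by (simp add: N_def)
  have "0 \<le> W" unfolding W_def using Gamma_sin_div_pi_nonneg assms by simp
  have "theta \<alpha> = K * (W / \<alpha>)" unfolding theta_def K_def W_def by (simp add: field_simps)
  also have "\<dots> \<le> W / \<alpha>"
    using one_minus_div_powr_mult_exp_le_1[of "5 + \<alpha>/2" "1 + \<alpha>"] assms \<open>0 \<le> W\<close>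
    by (intro mult_left_le_one_le) (auto simp: K_def)
  finally have "2 * theta \<alpha> / N \<le> 2 * (W / \<alpha>) / N"
    using \<open>0 < N\<close> by (intro divide_right_mono) auto
  also have "\<dots> = (2 * real n + \<alpha>) / \<alpha> * (W / ((real n + \<alpha>/2) * N))"
  proof -
    have "2 * (W / \<alpha>) / N = u / \<alpha> * (W / (u / 2 * N))" if "u \<noteq> 0" for u
      using that \<open>0 < N\<close> assms by (simp add: field_simps)
    from this[of "2 * real n + \<alpha>"] show ?thesis using assms by (simp add: add_divide_distrib)
  qed
  also have "\<dots> \<le> (2 * real n + \<alpha>) / \<alpha> * \<bar>frac_coeff \<alpha> (int n)\<bar>"
    using abs_frac_coeff_ge[OF assms] assms by (intro mult_left_mono) (auto simp: W_def N_def)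
  finally show ?thesis unfolding N_def .
qed

lemma theta_le_frac_coeff_0_minus_abs_sum:
  assumes "1 \<le> \<alpha>" "\<alpha> \<le> 2" "2 \<le> M"
  shows "2 * theta \<alpha> / (real M + 1) powr \<alpha> \<le> frac_coeff \<alpha> 0 - 2 * frac_abs_sum \<alpha> (M - 1)"
proof -
  have "\<alpha> * frac_coeff \<alpha> 0 - 2 * \<alpha> * frac_abs_sum \<alpha> (M - 1)
      = (2 * real M + \<alpha>) * \<bar>frac_coeff \<alpha> (int M)\<bar>"
    using frac_coeff_0_minus_abs_sum[of \<alpha> "M - 1"] assms by simp
  then have "frac_coeff \<alpha> 0 - 2 * frac_abs_sum \<alpha> (M - 1)
      = (2 * real M + \<alpha>) / \<alpha> * \<bar>frac_coeff \<alpha> (int M)\<bar>"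
    using assms by (simp add: field_simps)
  with theta_le_abs_frac_coeff[OF assms] show ?thesis by simp
qed

lemma mult_add_less_mult:
  fixes p q m n :: nat
  assumes "p < m" "q < n"
  shows "p * n + q < m * n"
proof -
  have "p * n + q < Suc p * n" using assms by simp
  also have "\<dots> \<le> m * n" using assms by (intro mult_le_mono1) simp
  finally show ?thesis .
qed

lemma sum_lessThan_mult:
  fixes g :: "nat \<Rightarrow> 'a::comm_monoid_add"
  shows "(\<Sum>j < m * n. g j) = (\<Sum>r < m. \<Sum>s < n. g (r * n + s))"
proof -
  have "(\<Sum>j < m * n. g j) = (\<Sum>r < m. sum g {r * n..<r * n + n})"
    by (rule sum.nat_group[symmetric])
  also have "\<dots> = (\<Sum>r < m. \<Sum>s < n. g (r * n + s))"
  proof (rule sum.cong[OF refl])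
    fix r
    have "sum g {0 + r * n..<n + r * n} = (\<Sum>s = 0..<n. g (s + r * n))"
      by (rule sum.shift_bounds_nat_ivl)
    then show "sum g {r * n..<r * n + n} = (\<Sum>s < n. g (r * n + s))"
      by (simp add: atLeast0LessThan add.commute)
  qed
  finally show ?thesis .
qed

lemma kron_sum_index:
  fixes A :: "'a::comm_ring_1 mat"
  assumes "A \<in> carrier_mat n n" "p < n" "q < n" "r < n" "s < n"
  shows "(kron (1\<^sub>m n) A + kron A (1\<^sub>m n)) $$ (p * n + q, r * n + s)
           = (if p = r then A $$ (q, s) else 0) + (if q = s then A $$ (p, r) else 0)"
  using assms mult_add_less_mult[of p n q n] mult_add_less_mult[of r n s n]
  by (simp add: kron_def)

lemma kron_sum_mult_vec_index:
  fixes A :: "'a::comm_ring_1 mat"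
  assumes A: "A \<in> carrier_mat n n" and v: "v \<in> carrier_vec (n * n)" and "p < n" "q < n"
  shows "((kron (1\<^sub>m n) A + kron A (1\<^sub>m n)) *\<^sub>v v) $ (p * n + q)
           = (\<Sum>s < n. A $$ (q, s) * v $ (p * n + s)) + (\<Sum>r < n. A $$ (p, r) * v $ (r * n + q))"
proof -
  let ?K = "kron (1\<^sub>m n) A + kron A (1\<^sub>m n)"
  have "(?K *\<^sub>v v) $ (p * n + q) = (\<Sum>j < n * n. ?K $$ (p * n + q, j) * v $ j)"
    using A v mult_add_less_mult[of p n q n] assms
    by (simp add: kron_def scalar_prod_def atLeast0LessThan)
  also have "\<dots> = (\<Sum>r < n. \<Sum>s < n. ?K $$ (p * n + q, r * n + s) * v $ (r * n + s))"
    by (rule sum_lessThan_mult)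
  also have "\<dots> = (\<Sum>r < n. \<Sum>s < n. (if p = r then A $$ (q, s) * v $ (r * n + s) else 0)
                                   + (if q = s then A $$ (p, r) * v $ (r * n + s) else 0))"
    using assms by (intro sum.cong refl) (auto simp: kron_sum_index[OF A] distrib_right)
  also have "\<dots> = (\<Sum>s < n. A $$ (q, s) * v $ (p * n + s)) + (\<Sum>r < n. A $$ (p, r) * v $ (r * n + q))"
    using assms by (simp add: sum.distrib sum.swap[of _ "{..<n}" "{..<n}"])
  finally show ?thesis .
qed

lemma sum_mult_ge_max_imp_eq:
  fixes a b :: "'i \<Rightarrow> real"
  assumes "finite S" "\<And>i. i \<in> S \<Longrightarrow> 0 \<le> a i" "\<And>i. i \<in> S \<Longrightarrow> b i \<le> m"
    and "(\<Sum>i\<in>S. a i) * m \<le> (\<Sum>i\<in>S. a i * b i)"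
    and "j \<in> S" "a j \<noteq> 0"
  shows "b j = m"
proof (rule ccontr)
  assume "b j \<noteq> m"
  with assms have "a j * b j < a j * m" by (simp add: order_less_le)
  with assms have "(\<Sum>i\<in>S. a i * b i) < (\<Sum>i\<in>S. a i * m)"
    by (intro sum_strict_mono_ex1) (auto intro: mult_left_mono)
  with assms(4) show False by (simp add: sum_distrib_right)
qed

lemma kron_sum_eigen_max_step:
  fixes A :: "real mat" and w :: "nat \<Rightarrow> nat \<Rightarrow> real"
  assumes eq: "\<And>p q. p < n \<Longrightarrow> q < n \<Longrightarrow>
      lam * w p q = (\<Sum>s < n. A $$ (q, s) * w p s) + (\<Sum>r < n. A $$ (p, r) * w r q)"
    and diag: "\<And>p. p < n \<Longrightarrow> A $$ (p, p) = d"
    and rows: "\<And>p. p < n \<Longrightarrow> (\<Sum>r \<in> {..<n} - {p}. \<bar>A $$ (p, r)\<bar>) \<le> E"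
    and row0: "(\<Sum>r \<in> {..<n} - {0}. \<bar>A $$ (0, r)\<bar>) < E"
    and subdiag: "\<And>p. 0 < p \<Longrightarrow> p < n \<Longrightarrow> A $$ (p, p - 1) \<noteq> 0"
    and far: "2 * E \<le> \<bar>lam - 2 * d\<bar>"
    and max: "\<And>p q. p < n \<Longrightarrow> q < n \<Longrightarrow> \<bar>w p q\<bar> \<le> m"
    and pq: "p < n" "q < n" "\<bar>w p q\<bar> = m" and "0 < m"
  shows "0 < p \<and> \<bar>w (p - 1) q\<bar> = m"
proof -
  define col where "col = (\<Sum>s \<in> {..<n} - {q}. A $$ (q, s) * w p s)"
  define row where "row = (\<Sum>r \<in> {..<n} - {p}. A $$ (p, r) * w r q)"
  define row_abs where "row_abs = (\<Sum>r \<in> {..<n} - {p}. \<bar>A $$ (p, r)\<bar> * \<bar>w r q\<bar>)"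
  define R where "R = (\<Sum>r \<in> {..<n} - {p}. \<bar>A $$ (p, r)\<bar>)"
  have "(\<Sum>s < n. A $$ (q, s) * w p s) = d * w p q + col"
    using pq diag unfolding col_def by (subst sum.remove[of _ q]) auto
  moreover have "(\<Sum>r < n. A $$ (p, r) * w r q) = d * w p q + row"
    using pq diag unfolding row_def by (subst sum.remove[of _ p]) auto
  ultimately have "(lam - 2 * d) * w p q = col + row"
    using eq[OF pq(1,2)] by (simp add: algebra_simps)
  then have "\<bar>lam - 2 * d\<bar> * m \<le> \<bar>col\<bar> + \<bar>row\<bar>"
    using pq(3) by (metis abs_mult abs_triangle_ineq)
  moreover have "\<bar>col\<bar> \<le> E * m"
  proof -
    have "\<bar>col\<bar> \<le> (\<Sum>s \<in> {..<n} - {q}. \<bar>A $$ (q, s)\<bar> * m)"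
      unfolding col_def using max pq
      by (intro order_trans[OF sum_abs] sum_mono) (auto simp: abs_mult intro: mult_left_mono)
    also have "\<dots> \<le> E * m"
      using rows[OF pq(2)] \<open>0 < m\<close> by (simp add: sum_distrib_right[symmetric])
    finally show ?thesis .
  qed
  moreover have "\<bar>row\<bar> \<le> row_abs"
    unfolding row_def row_abs_def by (rule order_trans[OF sum_abs]) (simp add: abs_mult)
  moreover have "2 * E * m \<le> \<bar>lam - 2 * d\<bar> * m"
    using far \<open>0 < m\<close> by (intro mult_right_mono) auto
  ultimately have "E * m \<le> row_abs" by linarith
  moreover have "row_abs \<le> R * m"
    unfolding row_abs_def R_def sum_distrib_right using max pq
    by (intro sum_mono) (auto intro: mult_left_mono)
  ultimately have "E * m \<le> R * m" by simp
  have "0 < p"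
  proof (rule ccontr)
    assume "\<not> 0 < p"
    then have "R < E" using row0 by (simp add: R_def)
    with \<open>E * m \<le> R * m\<close> \<open>0 < m\<close> show False by simp
  qed
  have "R * m \<le> E * m"
    using rows[OF pq(1)] \<open>0 < m\<close> unfolding R_def by (intro mult_right_mono) auto
  with \<open>E * m \<le> row_abs\<close> have "R * m \<le> row_abs" by linarith
  have "\<bar>w (p - 1) q\<bar> = m"
  proof (rule sum_mult_ge_max_imp_eq[of "{..<n} - {p}" "\<lambda>r. \<bar>A $$ (p, r)\<bar>" "\<lambda>r. \<bar>w r q\<bar>"])
    show "(\<Sum>r \<in> {..<n} - {p}. \<bar>A $$ (p, r)\<bar>) * m \<le> (\<Sum>r \<in> {..<n} - {p}. \<bar>A $$ (p, r)\<bar> * \<bar>w r q\<bar>)"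
      using \<open>R * m \<le> row_abs\<close> unfolding R_def row_abs_def .
  qed (use max pq \<open>0 < p\<close> subdiag in auto)
  with \<open>0 < p\<close> show ?thesis by simp
qed

lemma kron_sum_eigenvalue_strict_bound:
  fixes A :: "real mat"
  assumes A: "A \<in> carrier_mat n n"
    and diag: "\<And>p. p < n \<Longrightarrow> A $$ (p, p) = d"
    and rows: "\<And>p. p < n \<Longrightarrow> (\<Sum>r \<in> {..<n} - {p}. \<bar>A $$ (p, r)\<bar>) \<le> E"
    and row0: "(\<Sum>r \<in> {..<n} - {0}. \<bar>A $$ (0, r)\<bar>) < E"
    and subdiag: "\<And>p. 0 < p \<Longrightarrow> p < n \<Longrightarrow> A $$ (p, p - 1) \<noteq> 0"
    and "eigenvalue (kron (1\<^sub>m n) A + kron A (1\<^sub>m n)) lam"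
  shows "\<bar>lam - 2 * d\<bar> < 2 * E"
proof (rule ccontr)
  assume "\<not> ?thesis"
  then have far: "2 * E \<le> \<bar>lam - 2 * d\<bar>" by simp
  obtain v where "eigenvector (kron (1\<^sub>m n) A + kron A (1\<^sub>m n)) v lam"
    using assms(6) unfolding eigenvalue_def by blast
  then have v: "v \<in> carrier_vec (n * n)" "v \<noteq> 0\<^sub>v (n * n)"
    and Kv: "(kron (1\<^sub>m n) A + kron A (1\<^sub>m n)) *\<^sub>v v = lam \<cdot>\<^sub>v v"
    using A by (auto simp: eigenvector_def kron_def)
  define w where "w p q = v $ (p * n + q)" for p q
  have eq: "lam * w p q = (\<Sum>s < n. A $$ (q, s) * w p s) + (\<Sum>r < n. A $$ (p, r) * w r q)"
    if "p < n" "q < n" for p q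
    using kron_sum_mult_vec_index[OF A v(1) that] Kv v(1) mult_add_less_mult[OF that]
    by (simp add: w_def)
  obtain i where i: "i < n * n" "v $ i \<noteq> 0" using v by (auto simp: vec_eq_iff)
  then have "0 < n" by (cases n) auto
  have i_split: "i div n < n" "i mod n < n" "w (i div n) (i mod n) = v $ i"
    using i \<open>0 < n\<close> by (simp_all add: less_mult_imp_div_less w_def mult.commute)
  define entries where "entries = (\<lambda>(p, q). \<bar>w p q\<bar>) ` ({..<n} \<times> {..<n})"
  define m where "m = Max entries"
  have "finite entries" "entries \<noteq> {}" using \<open>0 < n\<close> by (auto simp: entries_def)
  have max: "\<bar>w p q\<bar> \<le> m" if "p < n" "q < n" for p q
    unfolding m_def using \<open>finite entries\<close> that by (intro Max_ge) (auto simp: entries_def)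
  obtain pm qm where pm: "pm < n" "qm < n" "\<bar>w pm qm\<bar> = m"
    using Max_in[OF \<open>finite entries\<close> \<open>entries \<noteq> {}\<close>] by (auto simp: m_def entries_def)
  have "0 < m" using max[OF i_split(1,2)] i_split(3) i(2) by simp
  have "\<forall>q < n. \<bar>w p q\<bar> \<noteq> m" if "p < n" for p
    using that
  proof (induction p)
    case 0
    then show ?case
      using kron_sum_eigen_max_step[OF eq diag rows row0 subdiag far max] \<open>0 < m\<close> by blast
  next
    case (Suc p)
    then show ?case
      using kron_sum_eigen_max_step[OF eq diag rows row0 subdiag far max, of "Suc p"] \<open>0 < m\<close>
      by auto
  qed
  with pm show False by blast
qed

lemma T0_carrier: "T0 \<alpha> M \<in> carrier_mat M M"
  unfolding T0_def by simp

lemma T0_off_diag_abs_sum: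
  assumes "p < M"
  shows "(\<Sum>r \<in> {..<M} - {p}. \<bar>T0 \<alpha> M $$ (p, r)\<bar>) = frac_abs_sum \<alpha> p + frac_abs_sum \<alpha> (M - 1 - p)"
proof -
  have split: "{..<M} - {p} = {..<p} \<union> {Suc p..<M}" using assms by auto
  have left: "(\<Sum>r < p. \<bar>T0 \<alpha> M $$ (p, r)\<bar>) = frac_abs_sum \<alpha> p"
    unfolding frac_abs_sum_def
    by (rule sum.reindex_bij_witness[where i = "\<lambda>k. p - k" and j = "\<lambda>r. p - r"])
       (use assms in \<open>auto simp: T0_def\<close>)
  have right: "(\<Sum>r \<in> {Suc p..<M}. \<bar>T0 \<alpha> M $$ (p, r)\<bar>) = frac_abs_sum \<alpha> (M - 1 - p)"
    unfolding frac_abs_sum_def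
  proof (rule sum.reindex_bij_witness[where i = "\<lambda>k. k + p" and j = "\<lambda>r. r - p"])
    fix r assume "r \<in> {Suc p..<M}"
    then show "\<bar>frac_coeff \<alpha> (int (r - p))\<bar> = \<bar>T0 \<alpha> M $$ (p, r)\<bar>"
      using frac_coeff_minus[of \<alpha> "int p - int r"] by (simp add: T0_def)
  qed auto
  show ?thesis unfolding split by (subst sum.union_disjoint) (auto simp: left right)
qed

lemma T0_kron_sum_eigenvalue_bound:
  assumes "0 < \<mu>" "0 < \<alpha>" "\<alpha> \<le> 2" "2 \<le> M"
    and "eigenvalue (kron (1\<^sub>m M) (\<mu> \<cdot>\<^sub>m T0 \<alpha> M) + kron (\<mu> \<cdot>\<^sub>m T0 \<alpha> M) (1\<^sub>m M)) lam"
  shows "\<bar>lam - 2 * (\<mu> * frac_coeff \<alpha> 0)\<bar> < 2 * (\<mu> * (2 * frac_abs_sum \<alpha> (M - 1)))"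
proof (rule kron_sum_eigenvalue_strict_bound)
  have abs_sum: "(\<Sum>r \<in> {..<M} - {p}. \<bar>(\<mu> \<cdot>\<^sub>m T0 \<alpha> M) $$ (p, r)\<bar>)
      = \<mu> * (frac_abs_sum \<alpha> p + frac_abs_sum \<alpha> (M - 1 - p))" if "p < M" for p
  proof -
    have "(\<Sum>r \<in> {..<M} - {p}. \<bar>(\<mu> \<cdot>\<^sub>m T0 \<alpha> M) $$ (p, r)\<bar>)
        = (\<Sum>r \<in> {..<M} - {p}. \<mu> * \<bar>T0 \<alpha> M $$ (p, r)\<bar>)"
      using that \<open>0 < \<mu>\<close> T0_carrier[of \<alpha> M] by (intro sum.cong) (auto simp: abs_mult)
    then show ?thesis by (simp only: sum_distrib_left[symmetric] T0_off_diag_abs_sum[OF that])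
  qed
  show "(\<Sum>r \<in> {..<M} - {p}. \<bar>(\<mu> \<cdot>\<^sub>m T0 \<alpha> M) $$ (p, r)\<bar>) \<le> \<mu> * (2 * frac_abs_sum \<alpha> (M - 1))"
    if "p < M" for p
  proof -
    have "frac_abs_sum \<alpha> p \<le> frac_abs_sum \<alpha> (M - 1)" "frac_abs_sum \<alpha> (M - 1 - p) \<le> frac_abs_sum \<alpha> (M - 1)"
      using that by (simp_all add: frac_abs_sum_mono)
    then show ?thesis unfolding abs_sum[OF that] using \<open>0 < \<mu>\<close> by (simp add: mult_left_mono)
  qed
  show "(\<Sum>r \<in> {..<M} - {0}. \<bar>(\<mu> \<cdot>\<^sub>m T0 \<alpha> M) $$ (0, r)\<bar>) < \<mu> * (2 * frac_abs_sum \<alpha> (M - 1))"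
    using abs_sum[of 0] assms frac_abs_sum_pos[of \<alpha> "M - 1"] by (simp add: frac_abs_sum_def)
qed (use assms abs_frac_coeff_1_pos[of \<alpha>] in \<open>auto simp: T0_def\<close>)

theorem lemma3:
  fixes a b dt \<alpha> lam :: real and M :: nat
  assumes "a < b" and "dt > 0"
    and "M \<ge> 4" and "even M"
    and "1 < \<alpha>" and "\<alpha> \<le> 2"
  defines "h \<equiv> (b - a) / real (M + 1)"
  defines "mu \<equiv> dt / h powr \<alpha>"
  defines "T1 \<equiv> mu \<cdot>\<^sub>m T0 \<alpha> M"
  defines "T2 \<equiv> kron (1\<^sub>m M) T1 + kron T1 (1\<^sub>m M)"
  assumes "eigenvalue T2 lam"
  shows "4 * dt * theta \<alpha> / (b - a) powr \<alpha> < lam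
    \<and> lam < 4 * dt / h powr \<alpha> * (Gamma (\<alpha> + 1) / Gamma (\<alpha>/2 + 1)^2
                                  - theta \<alpha> * h powr \<alpha> / (b - a) powr \<alpha>)"
proof -
  define c0 where "c0 = frac_coeff \<alpha> 0"
  define E where "E = 2 * frac_abs_sum \<alpha> (M - 1)"
  define N where "N = (real M + 1) powr \<alpha>"
  have "0 < N" "0 < (b - a) powr \<alpha>" using \<open>a < b\<close> by (simp_all add: N_def)
  have h_powr: "h powr \<alpha> = (b - a) powr \<alpha> / N"
    unfolding h_def N_def using \<open>a < b\<close> by (simp add: powr_divide add.commute)
  have "0 < mu" unfolding mu_def h_powr using \<open>dt > 0\<close> \<open>0 < N\<close> \<open>0 < (b - a) powr \<alpha>\<close> by simp
  have gershgorin: "\<bar>lam - 2 * (mu * c0)\<bar> < 2 * (mu * E)"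
    using T0_kron_sum_eigenvalue_bound[OF \<open>0 < mu\<close>, of \<alpha> M lam] assms
    by (simp add: T2_def T1_def c0_def E_def)
  have "2 * theta \<alpha> / N \<le> c0 - E"
    using theta_le_frac_coeff_0_minus_abs_sum[of \<alpha> M] assms by (simp add: c0_def E_def N_def)
  then have "2 * mu * (2 * theta \<alpha> / N) \<le> 2 * mu * (c0 - E)"
    and "2 * mu * (c0 + E) \<le> 2 * mu * (2 * c0 - 2 * theta \<alpha> / N)"
    using \<open>0 < mu\<close> by (intro mult_left_mono; simp)+
  moreover have lower: "4 * dt * theta \<alpha> / (b - a) powr \<alpha> = 2 * mu * (2 * theta \<alpha> / N)"
    unfolding mu_def h_powr using \<open>0 < N\<close> \<open>0 < (b - a) powr \<alpha>\<close> by (simp add: field_simps)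
  moreover have upper: "4 * dt / h powr \<alpha> * (Gamma (\<alpha> + 1) / Gamma (\<alpha>/2 + 1)^2
      - theta \<alpha> * h powr \<alpha> / (b - a) powr \<alpha>) = 2 * mu * (2 * c0 - 2 * theta \<alpha> / N)"
    unfolding c0_def frac_coeff_0 mu_def h_powr using \<open>0 < N\<close> \<open>0 < (b - a) powr \<alpha>\<close>
    by (simp add: field_simps)
  ultimately show ?thesis
    unfolding lower upper using gershgorin by (auto simp: abs_less_iff algebra_simps)
qed

end
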